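(* Let $p=p(n)\in[0,1]$, let $\omega=\omega(n)\to\infty$ as $n\to\infty$, and set $z=z(n,\omega):=\omega\sqrt{n}$. Suppose there is a function $\Gamma=\Gamma(z,n,p)$ such that, with high probability, $$\max_{Z\subseteq[n]:\,|Z|\le z}\chi\big(G_{n,p}[Z]\big)\le\Gamma.$$ Then with high probability $|\chi(G_{n,p})-\Lambda|\le\Gamma$, where $\Lambda=\Lambda(n,p)$ is the smallest integer with $\Pr(\chi(G_{n,p})\le\Lambda)\ge1/2$.
   Context: $G_{n,p}$ denotes the binomial random graph on vertex set $[n]$ in which each pair of vertices is an edge independently with probability $p$; $G[Z]$ is the subgraph induced by the vertex set $Z$; $\chi$ denotes the chromatic number. "With high probability" means with probability tending to $1$ as $n\to\infty$. *)

theory Defs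
  imports "HOL-Probability.Probability"
begin

definition all_pairs :: "nat \<Rightarrow> nat set set" where
  "all_pairs n = {{i, j} | i j. 1 \<le> i \<and> i < j \<and> j \<le> n}"

definition gnp :: "nat \<Rightarrow> real \<Rightarrow> nat set set pmf" where
  "gnp n p = map_pmf (\<lambda>f. {e \<in> all_pairs n. f e})
              (Pi_pmf (all_pairs n) False (\<lambda>_. bernoulli_pmf p))"

definition chi :: "nat set set \<Rightarrow> nat set \<Rightarrow> nat" where
  "chi E V = (LEAST k. \<exists>c :: nat \<Rightarrow> nat. (\<forall>v\<in>V. c v < k) \<and>
                 (\<forall>u\<in>V. \<forall>v\<in>V. {u, v} \<in> E \<longrightarrow> c u \<noteq> c v))"

definition Lambda :: "nat \<Rightarrow> real \<Rightarrow> nat" where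
  "Lambda n p = (LEAST k. measure_pmf.prob (gnp n p) {E. chi E {1..n} \<le> k} \<ge> 1/2)"

end

theory Submission
  imports Defs
begin

(*
  Let Y_k be the least number of vertices whose deletion from G(n,p) leaves a k-colourable
  graph. Exposing the vertices one at a time, each vertex changes Y_k by at most one, so
  Var Y_k <= n (Efron-Stein), and Chebyshev confines Y_k to O(sqrt n) around its mean.
  Moreover Pr(Y_k = 0) (E Y_k)^2 <= Var Y_k.

  Upper tail: Pr(Y_Lambda = 0) = Pr(chi <= Lambda) >= 1/2 gives E Y_Lambda <= sqrt (2n), so
  whp Y_Lambda <= omega sqrt n; the deleted vertices then span a graph of chromatic number at
  most Gamma, and fresh colours for them give chi <= Lambda + Gamma.

  Lower tail: if k + Gamma < Lambda, then E Y_k > omega sqrt n / 2, for otherwise the same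
  argument would give chi <= k + Gamma < Lambda with probability more than 1/2. Hence
  Pr(chi <= k) = Pr(Y_k = 0) <= Var Y_k / (E Y_k)^2 <= 4 / omega^2.
*)

lemma abs_expectation_le_finite_pmf:
  fixes f :: "'a \<Rightarrow> real"
  assumes "finite (set_pmf A)" "\<And>a. a \<in> set_pmf A \<Longrightarrow> \<bar>f a\<bar> \<le> c"
  shows "\<bar>measure_pmf.expectation A f\<bar> \<le> c"
proof -
  have "\<bar>measure_pmf.expectation A f\<bar> \<le> measure_pmf.expectation A (\<lambda>a. \<bar>f a\<bar>)"
    by (rule integral_abs_bound)
  also have "\<dots> \<le> c"
    using assms by (intro measure_pmf.integral_le_const integrable_measure_pmf_finite)
      (auto simp: AE_measure_pmf_iff)
  finally show ?thesis .
qed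

lemma expectation_pair_pmf_finite:
  fixes h :: "'a \<times> 'b \<Rightarrow> real"
  assumes "finite (set_pmf A)" "finite (set_pmf B)"
  shows "measure_pmf.expectation (pair_pmf A B) h =
         measure_pmf.expectation A (\<lambda>a. measure_pmf.expectation B (\<lambda>b. h (a, b)))"
proof -
  have "measure_pmf.expectation (pair_pmf A B) h =
        (\<Sum>x\<in>set_pmf A \<times> set_pmf B. pmf (pair_pmf A B) x * h x)"
    using assms by (subst integral_measure_pmf[of "set_pmf A \<times> set_pmf B"]) auto
  also have "\<dots> = (\<Sum>a\<in>set_pmf A. \<Sum>b\<in>set_pmf B. pmf A a * (pmf B b * h (a, b)))"
    by (subst sum.cartesian_product) (auto intro!: sum.cong simp: pmf_pair)
  also have "\<dots> = measure_pmf.expectation A (\<lambda>a. measure_pmf.expectation B (\<lambda>b. h (a, b)))"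
    using assms by (simp add: integral_measure_pmf[of "set_pmf _"] sum_distrib_left)
  finally show ?thesis .
qed

lemma variance_finite_pmf_eq:
  fixes f :: "'a \<Rightarrow> real"
  assumes "finite (set_pmf A)"
  shows "measure_pmf.variance A f =
    measure_pmf.expectation A (\<lambda>x. (f x)\<^sup>2) - (measure_pmf.expectation A f)\<^sup>2"
  using assms by (intro measure_pmf.variance_eq integrable_measure_pmf_finite)

lemma variance_pair_pmf_finite:
  fixes h :: "'a \<times> 'b \<Rightarrow> real"
  assumes A: "finite (set_pmf A)" and B: "finite (set_pmf B)"
  shows "measure_pmf.variance (pair_pmf A B) h =
    measure_pmf.expectation A (\<lambda>a. measure_pmf.variance B (\<lambda>b. h (a, b))) +
    measure_pmf.variance A (\<lambda>a. measure_pmf.expectation B (\<lambda>b. h (a, b)))"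
proof -
  define g where "g = (\<lambda>a. measure_pmf.expectation B (\<lambda>b. h (a, b)))"
  define s where "s = (\<lambda>a. measure_pmf.expectation B (\<lambda>b. (h (a, b))\<^sup>2))"
  have "measure_pmf.variance (pair_pmf A B) h =
        measure_pmf.expectation A s - (measure_pmf.expectation A g)\<^sup>2"
    using assms by (subst variance_finite_pmf_eq) (simp_all add: expectation_pair_pmf_finite s_def g_def)
  moreover have "measure_pmf.expectation A (\<lambda>a. measure_pmf.variance B (\<lambda>b. h (a, b))) =
        measure_pmf.expectation A s - measure_pmf.expectation A (\<lambda>a. (g a)\<^sup>2)"
    using assms by (simp add: variance_finite_pmf_eq s_def g_def integrable_measure_pmf_finite)
  moreover have "measure_pmf.variance A g =
        measure_pmf.expectation A (\<lambda>a. (g a)\<^sup>2) - (measure_pmf.expectation A g)\<^sup>2"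
    using A by (rule variance_finite_pmf_eq)
  ultimately show ?thesis by (simp add: g_def)
qed

lemma variance_le_sq_if_oscillation_le:
  fixes g :: "'a \<Rightarrow> real"
  assumes fin: "finite (set_pmf A)"
    and osc: "\<And>a a'. a \<in> set_pmf A \<Longrightarrow> a' \<in> set_pmf A \<Longrightarrow> \<bar>g a - g a'\<bar> \<le> c"
  shows "measure_pmf.variance A g \<le> c\<^sup>2"
proof -
  let ?\<mu> = "measure_pmf.expectation A g"
  have "\<bar>g a - ?\<mu>\<bar> \<le> c" if a: "a \<in> set_pmf A" for a
  proof -
    have "g a - ?\<mu> = measure_pmf.expectation A (\<lambda>a'. g a - g a')"
      using fin by (simp add: integrable_measure_pmf_finite)
    also have "\<bar>\<dots>\<bar> \<le> c"
      using fin osc a by (intro abs_expectation_le_finite_pmf) auto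
    finally show ?thesis .
  qed
  then have "\<And>a. a \<in> set_pmf A \<Longrightarrow> (g a - ?\<mu>)\<^sup>2 \<le> c\<^sup>2"
    by (metis abs_le_square_iff abs_of_nonneg abs_ge_zero order_trans)
  then show ?thesis
    using fin by (intro measure_pmf.integral_le_const integrable_measure_pmf_finite)
      (auto simp: AE_measure_pmf_iff)
qed

lemma finite_set_pmf_Pi_pmf:
  assumes "finite A" "\<And>x. x \<in> A \<Longrightarrow> finite (set_pmf (q x))"
  shows "finite (set_pmf (Pi_pmf A dflt q))"
  using assms by (intro finite_subset[OF set_Pi_pmf_subset'] finite_PiE_dflt) auto

lemma variance_Pi_pmf_Un_le:
  fixes F :: "('a \<Rightarrow> 'b) \<Rightarrow> real"
  assumes fin: "finite A" "finite J" and disj: "A \<inter> J = {}"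
    and fin_q: "\<And>x. finite (set_pmf (q x))"
    and var: "\<And>a. measure_pmf.variance (Pi_pmf J dflt q) (\<lambda>b. F (\<lambda>x. if x \<in> A then a x else b x)) \<le> v"
    and diff: "\<And>x y. (\<And>i. i \<notin> A \<Longrightarrow> x i = y i) \<Longrightarrow> \<bar>F x - F y\<bar> \<le> c"
  shows "measure_pmf.variance (Pi_pmf (A \<union> J) dflt q) F \<le> v + c\<^sup>2"
proof -
  define PA where "PA = Pi_pmf A dflt q"
  define PJ where "PJ = Pi_pmf J dflt q"
  define G where "G = (\<lambda>a b. F (\<lambda>x. if x \<in> A then a x else b x))"
  have fin_PA: "finite (set_pmf PA)" and fin_PJ: "finite (set_pmf PJ)"
    unfolding PA_def PJ_def using fin fin_q by (auto intro: finite_set_pmf_Pi_pmf)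
  have "measure_pmf.variance (Pi_pmf (A \<union> J) dflt q) F =
      measure_pmf.expectation PA (\<lambda>a. measure_pmf.variance PJ (G a)) +
      measure_pmf.variance PA (\<lambda>a. measure_pmf.expectation PJ (G a))"
    using fin disj fin_PA fin_PJ
    by (simp add: Pi_pmf_union PA_def PJ_def G_def variance_pair_pmf_finite)
  also have "\<dots> \<le> v + c\<^sup>2"
  proof (rule add_mono)
    show "measure_pmf.expectation PA (\<lambda>a. measure_pmf.variance PJ (G a)) \<le> v"
      using fin_PA var
      by (intro measure_pmf.integral_le_const integrable_measure_pmf_finite) (auto simp: PJ_def G_def)
    show "measure_pmf.variance PA (\<lambda>a. measure_pmf.expectation PJ (G a)) \<le> c\<^sup>2"
    proof (rule variance_le_sq_if_oscillation_le[OF fin_PA])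
      fix a a'
      have "measure_pmf.expectation PJ (G a) - measure_pmf.expectation PJ (G a') =
            measure_pmf.expectation PJ (\<lambda>b. G a b - G a' b)"
        using fin_PJ by (simp add: integrable_measure_pmf_finite)
      also have "\<bar>\<dots>\<bar> \<le> c"
        using fin_PJ unfolding G_def by (intro abs_expectation_le_finite_pmf diff) auto
      finally show "\<bar>measure_pmf.expectation PJ (G a) - measure_pmf.expectation PJ (G a')\<bar> \<le> c" .
    qed
  qed
  finally show ?thesis .
qed

lemma variance_Pi_pmf_bounded_differences:
  fixes B :: "nat \<Rightarrow> 'a set" and F :: "('a \<Rightarrow> 'b) \<Rightarrow> real"
  assumes fin: "\<And>i. i < m \<Longrightarrow> finite (B i)" and fin_q: "\<And>x. finite (set_pmf (q x))"
    and disj: "\<And>i j. i < m \<Longrightarrow> j < m \<Longrightarrow> i \<noteq> j \<Longrightarrow> B i \<inter> B j = {}"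
    and diff: "\<And>i x y. i < m \<Longrightarrow> (\<And>a. a \<notin> B i \<Longrightarrow> x a = y a) \<Longrightarrow> \<bar>F x - F y\<bar> \<le> c"
  shows "measure_pmf.variance (Pi_pmf (\<Union>i<m. B i) dflt q) F \<le> real m * c\<^sup>2"
  using fin disj diff
proof (induction m arbitrary: F)
  case 0
  then show ?case by simp
next
  case (Suc m)
  have "B m \<inter> B i = {}" if "i < m" for i
    using Suc.prems(2)[of m i] that by simp
  then have disj_m: "B m \<inter> (\<Union>i<m. B i) = {}"
    by blast
  have "measure_pmf.variance (Pi_pmf (B m \<union> (\<Union>i<m. B i)) dflt q) F \<le> real m * c\<^sup>2 + c\<^sup>2"
  proof (intro variance_Pi_pmf_Un_le fin_q)
    fix a
    show "measure_pmf.variance (Pi_pmf (\<Union>i<m. B i) dflt q)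
        (\<lambda>b. F (\<lambda>x. if x \<in> B m then a x else b x)) \<le> real m * c\<^sup>2"
    proof (rule Suc.IH)
      fix i and x y :: "'a \<Rightarrow> 'b"
      assume "i < m" and "\<And>a. a \<notin> B i \<Longrightarrow> x a = y a"
      then show "\<bar>F (\<lambda>z. if z \<in> B m then a z else x z) - F (\<lambda>z. if z \<in> B m then a z else y z)\<bar> \<le> c"
        by (intro Suc.prems(3)[of i]) auto
    qed (use Suc.prems in auto)
  qed (use Suc.prems disj_m in \<open>auto intro: Suc.prems(3)[of m]\<close>)
  then show ?case
    by (simp add: lessThan_Suc algebra_simps)
qed

lemma Chebyshev_inequality_finite_pmf:
  fixes X :: "'a \<Rightarrow> real"
  assumes "finite (set_pmf M)" "a > 0"
  shows "measure_pmf.prob M {x. a \<le> \<bar>X x - measure_pmf.expectation M X\<bar>}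
           \<le> measure_pmf.variance M X / a\<^sup>2"
  using measure_pmf.Chebyshev_inequality[OF _ integrable_measure_pmf_finite[OF assms(1)] assms(2)]
  by simp

lemma prob_eq_0_mult_expectation_sq_le_variance:
  fixes X :: "'a \<Rightarrow> real"
  assumes "finite (set_pmf M)"
  shows "measure_pmf.prob M {x. X x = 0} * (measure_pmf.expectation M X)\<^sup>2
           \<le> measure_pmf.variance M X"
proof (cases "measure_pmf.expectation M X = 0")
  case False
  let ?\<mu> = "measure_pmf.expectation M X"
  have "measure_pmf.prob M {x. X x = 0} \<le> measure_pmf.prob M {x. \<bar>?\<mu>\<bar> \<le> \<bar>X x - ?\<mu>\<bar>}"
    by (rule measure_pmf.finite_measure_mono) auto
  also have "\<dots> \<le> measure_pmf.variance M X / \<bar>?\<mu>\<bar>\<^sup>2"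
    using assms False by (intro Chebyshev_inequality_finite_pmf) auto
  finally show ?thesis
    using False by (simp add: field_simps)
qed simp

lemma measure_pmf_prob_le_add_if_subset_Un:
  "A \<subseteq> B \<union> C \<Longrightarrow> measure_pmf.prob M A \<le> measure_pmf.prob M B + measure_pmf.prob M C"
  using measure_pmf.finite_measure_mono[of A "B \<union> C" M] measure_Un_le[of B M C] by simp

lemma measure_pmf_prob_Collect_not:
  "measure_pmf.prob M {x. \<not> P x} = 1 - measure_pmf.prob M {x. P x}"
  using measure_pmf.prob_compl[of "{x. P x}" M] by (simp add: set_diff_eq)

lemma tendsto_divide_power2_at_top:
  fixes f :: "'a \<Rightarrow> real"
  assumes "filterlim f at_top F"
  shows "((\<lambda>x. c / (f x)\<^sup>2) \<longlongrightarrow> 0) F"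
  using tendsto_mult_right_zero[OF tendsto_inverse_0_at_top[OF filterlim_pow_at_top[OF _ assms, of 2]], of c]
  by (simp add: divide_inverse)

definition colouring :: "nat set set \<Rightarrow> nat set \<Rightarrow> nat \<Rightarrow> (nat \<Rightarrow> nat) \<Rightarrow> bool" where
  "colouring E V k c \<longleftrightarrow> (\<forall>v\<in>V. c v < k) \<and> (\<forall>u\<in>V. \<forall>v\<in>V. {u, v} \<in> E \<longrightarrow> c u \<noteq> c v)"

definition loopless :: "nat set set \<Rightarrow> bool" where
  "loopless E \<longleftrightarrow> (\<forall>u. {u} \<notin> E)"

lemma chi_eq_Least_colouring: "chi E V = (LEAST k. \<exists>c. colouring E V k c)"
  unfolding chi_def colouring_def by simp

lemma chi_le_colouring: "colouring E V k c \<Longrightarrow> chi E V \<le> k"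
  unfolding chi_eq_Least_colouring by (rule Least_le) blast

lemma colouring_chi:
  assumes "loopless E" "finite V"
  shows "\<exists>c. colouring E V (chi E V) c"
proof -
  obtain k where "\<forall>v\<in>V. v < k"
    using assms(2) finite_nat_bounded by (auto simp: subset_eq)
  with assms(1) have "colouring E V k id"
    unfolding colouring_def loopless_def by auto
  then have "\<exists>k c. colouring E V k c"
    by blast
  then show ?thesis
    unfolding chi_eq_Least_colouring by (rule LeastI_ex)
qed

lemma chi_empty [simp]: "chi E {} = 0"
  using chi_le_colouring[of E "{}" 0 id] by (simp add: colouring_def)

lemma chi_mono:
  assumes "loopless E" "finite W" "V \<subseteq> W"
  shows "chi E V \<le> chi E W"
proof -
  obtain c where "colouring E W (chi E W) c"
    using colouring_chi assms(1,2) by blast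
  with assms(3) have "colouring E V (chi E W) c"
    unfolding colouring_def by blast
  then show ?thesis
    by (rule chi_le_colouring)
qed

lemma chi_cong:
  assumes "\<And>u v. u \<in> V \<Longrightarrow> v \<in> V \<Longrightarrow> {u, v} \<in> E \<longleftrightarrow> {u, v} \<in> E'"
  shows "chi E V = chi E' V"
proof -
  have "colouring E V k c \<longleftrightarrow> colouring E' V k c" for k c
    using assms unfolding colouring_def by blast
  then have "(\<lambda>k. \<exists>c. colouring E V k c) = (\<lambda>k. \<exists>c. colouring E' V k c)"
    by simp
  then show ?thesis
    unfolding chi_eq_Least_colouring by simp
qed

lemma chi_Un_le:
  assumes "loopless E" "finite V" "finite W"
  shows "chi E (V \<union> W) \<le> chi E V + chi E W"
proof -
  obtain c\<^sub>V c\<^sub>W where c\<^sub>V: "colouring E V (chi E V) c\<^sub>V" and c\<^sub>W: "colouring E W (chi E W) c\<^sub>W"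
    using colouring_chi assms by meson
  define c where "c v = (if v \<in> W then chi E V + c\<^sub>W v else c\<^sub>V v)" for v
  have "c v < chi E V + chi E W" if "v \<in> V \<union> W" for v
    using c\<^sub>V c\<^sub>W that unfolding colouring_def c_def by (auto intro: trans_less_add1)
  moreover have "c u \<noteq> c v" if "u \<in> V \<union> W" "v \<in> V \<union> W" "{u, v} \<in> E" for u v
  proof (cases "u \<in> W"; cases "v \<in> W")
    assume "u \<in> W" "v \<in> W"
    then show ?thesis
      using c\<^sub>W that(3) by (simp add: c_def colouring_def)
  next
    assume "u \<notin> W" "v \<notin> W"
    then show ?thesis
      using c\<^sub>V that by (simp add: c_def colouring_def)
  next
    assume "u \<in> W" "v \<notin> W"
    then have "c v < chi E V"
      using c\<^sub>V that(2) by (simp add: c_def colouring_def)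
    then show ?thesis
      using \<open>u \<in> W\<close> by (simp add: c_def)
  next
    assume "u \<notin> W" "v \<in> W"
    then have "c u < chi E V"
      using c\<^sub>V that(1) by (simp add: c_def colouring_def)
    then show ?thesis
      using \<open>v \<in> W\<close> by (simp add: c_def)
  qed
  ultimately have "colouring E (V \<union> W) (chi E V + chi E W) c"
    unfolding colouring_def by blast
  then show ?thesis
    by (rule chi_le_colouring)
qed

definition deletion_number :: "nat set set \<Rightarrow> nat set \<Rightarrow> nat \<Rightarrow> nat" where
  "deletion_number E V k = (LEAST s. \<exists>Z\<subseteq>V. card Z = s \<and> chi E (V - Z) \<le> k)"

lemma deletion_number_witness:
  assumes "finite V"
  obtains Z where "Z \<subseteq> V" "card Z = deletion_number E V k" "chi E (V - Z) \<le> k"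
proof -
  have "\<exists>s. \<exists>Z\<subseteq>V. card Z = s \<and> chi E (V - Z) \<le> k"
    by (intro exI[of _ "card V"] exI[of _ V]) simp
  then have "\<exists>Z\<subseteq>V. card Z = deletion_number E V k \<and> chi E (V - Z) \<le> k"
    unfolding deletion_number_def by (rule LeastI_ex)
  then show ?thesis
    using that by blast
qed

lemma deletion_number_le: "Z \<subseteq> V \<Longrightarrow> chi E (V - Z) \<le> k \<Longrightarrow> deletion_number E V k \<le> card Z"
  unfolding deletion_number_def by (rule Least_le) blast

lemma deletion_number_eq_0_iff:
  assumes "finite V"
  shows "deletion_number E V k = 0 \<longleftrightarrow> chi E V \<le> k"
proof
  assume "deletion_number E V k = 0"
  then obtain Z where "Z \<subseteq> V" "card Z = 0" "chi E (V - Z) \<le> k"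
    using deletion_number_witness[OF assms] by metis
  moreover from this have "Z = {}"
    using assms finite_subset by fastforce
  ultimately show "chi E V \<le> k"
    by simp
next
  assume "chi E V \<le> k"
  then show "deletion_number E V k = 0"
    using deletion_number_le[of "{}" V E k] by simp
qed

lemma deletion_number_le_Suc:
  assumes "loopless E" "finite V" "v \<in> V"
    and agree: "\<And>e. v \<notin> e \<Longrightarrow> e \<in> E' \<longleftrightarrow> e \<in> E"
  shows "deletion_number E' V k \<le> Suc (deletion_number E V k)"
proof -
  obtain Z where Z: "Z \<subseteq> V" "card Z = deletion_number E V k" "chi E (V - Z) \<le> k"
    using deletion_number_witness[OF assms(2)] by metis
  have "chi E' (V - insert v Z) = chi E (V - insert v Z)"
    using agree by (intro chi_cong) auto
  also have "\<dots> \<le> chi E (V - Z)"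
    using assms(1,2) by (intro chi_mono) auto
  finally have "deletion_number E' V k \<le> card (insert v Z)"
    using Z(1,3) assms(3) by (intro deletion_number_le) auto
  also have "\<dots> \<le> Suc (card Z)"
    by (simp add: card_insert_le_m1 card_insert_if)
  finally show ?thesis
    using Z(2) by simp
qed

definition small_subgraphs_colourable :: "nat set set \<Rightarrow> nat set \<Rightarrow> real \<Rightarrow> real \<Rightarrow> bool" where
  "small_subgraphs_colourable E V z g \<longleftrightarrow>
     (\<forall>Z \<subseteq> V. real (card Z) \<le> z \<longrightarrow> real (chi E Z) \<le> g)"

lemma chi_le_add_if_small_subgraphs_colourable:
  assumes "loopless E" "finite V"
    and "real (deletion_number E V k) \<le> z" "small_subgraphs_colourable E V z g"
  shows "real (chi E V) \<le> real k + g"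
proof -
  obtain Z where Z: "Z \<subseteq> V" "card Z = deletion_number E V k" "chi E (V - Z) \<le> k"
    using deletion_number_witness[OF assms(2)] by metis
  have "chi E V = chi E ((V - Z) \<union> Z)"
    using Z(1) by (simp add: Un_absorb2)
  also have "\<dots> \<le> chi E (V - Z) + chi E Z"
    using assms(1,2) Z(1) by (intro chi_Un_le) (auto intro: finite_subset)
  finally have "real (chi E V) \<le> real (chi E (V - Z)) + real (chi E Z)"
    by linarith
  moreover have "real (chi E Z) \<le> g"
    using assms(3,4) Z unfolding small_subgraphs_colourable_def by auto
  ultimately show ?thesis
    using Z(3) by linarith
qed

(* Sampling edge indicators instead of edge sets makes every sample loopless and exposes the
   product structure used for vertex exposure. *)

definition graph_of :: "nat \<Rightarrow> (nat set \<Rightarrow> bool) \<Rightarrow> nat set set" where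
  "graph_of n f = {e \<in> all_pairs n. f e}"

definition edge_pmf :: "nat \<Rightarrow> real \<Rightarrow> (nat set \<Rightarrow> bool) pmf" where
  "edge_pmf n p = Pi_pmf (all_pairs n) False (\<lambda>_. bernoulli_pmf p)"

lemma prob_gnp:
  "measure_pmf.prob (gnp n p) {E. P E} = measure_pmf.prob (edge_pmf n p) {f. P (graph_of n f)}"
  unfolding gnp_def edge_pmf_def graph_of_def by (simp add: vimage_def)

lemma loopless_graph_of: "loopless (graph_of n f)"
  unfolding loopless_def graph_of_def all_pairs_def by (auto simp: doubleton_eq_iff)

lemma chi_graph_of_le: "chi (graph_of n f) {1..n} \<le> n"
proof -
  have "u - 1 \<noteq> v - 1" if "u \<in> {1..n}" "v \<in> {1..n}" "{u, v} \<in> graph_of n f" for u v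
  proof
    assume "u - 1 = v - 1"
    with that(1,2) have "u = v"
      by arith
    with that(3) show False
      using loopless_graph_of[of n f] by (simp add: loopless_def)
  qed
  then have "colouring (graph_of n f) {1..n} n (\<lambda>v. v - 1)"
    unfolding colouring_def by auto
  then show ?thesis
    by (rule chi_le_colouring)
qed

definition back_edges :: "nat \<Rightarrow> nat set set" where
  "back_edges v = {{u, v} | u. 1 \<le> u \<and> u < v}"

lemma finite_back_edges: "finite (back_edges v)"
proof -
  have "back_edges v \<subseteq> (\<lambda>u. {u, v}) ` {..<v}"
    unfolding back_edges_def by auto
  then show ?thesis
    by (rule finite_subset) auto
qed

lemma back_edges_disjoint: "u \<noteq> v \<Longrightarrow> back_edges u \<inter> back_edges v = {}"
  unfolding back_edges_def by (auto simp: doubleton_eq_iff)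

lemma UN_back_edges: "(\<Union>i<n. back_edges (Suc i)) = all_pairs n"
proof
  show "(\<Union>i<n. back_edges (Suc i)) \<subseteq> all_pairs n"
  proof
    fix e assume "e \<in> (\<Union>i<n. back_edges (Suc i))"
    then obtain i u where "i < n" "e = {u, Suc i}" "1 \<le> u" "u < Suc i"
      unfolding back_edges_def by auto
    moreover from this have "Suc i \<le> n"
      by simp
    ultimately show "e \<in> all_pairs n"
      unfolding all_pairs_def by blast
  qed
next
  show "all_pairs n \<subseteq> (\<Union>i<n. back_edges (Suc i))"
  proof
    fix e assume "e \<in> all_pairs n"
    then obtain u v where "e = {u, v}" "1 \<le> u" "u < v" "v \<le> n"
      unfolding all_pairs_def by auto
    then have "e \<in> back_edges (Suc (v - 1))" "v - 1 < n"
      unfolding back_edges_def by auto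
    then show "e \<in> (\<Union>i<n. back_edges (Suc i))"
      by blast
  qed
qed

lemma finite_set_edge_pmf: "finite (set_pmf (edge_pmf n p))"
  unfolding edge_pmf_def UN_back_edges[symmetric]
  by (intro finite_set_pmf_Pi_pmf) (auto simp: finite_back_edges)

lemma variance_deletion_number_le:
  "measure_pmf.variance (edge_pmf n p) (\<lambda>f. real (deletion_number (graph_of n f) {1..n} k))
     \<le> real n"
proof -
  have "\<bar>real (deletion_number (graph_of n f) {1..n} k) -
          real (deletion_number (graph_of n f') {1..n} k)\<bar> \<le> 1"
    if "i < n" and agree: "\<And>e. e \<notin> back_edges (Suc i) \<Longrightarrow> f e = f' e" for i f f'
  proof -
    have "e \<in> graph_of n f \<longleftrightarrow> e \<in> graph_of n f'" if "Suc i \<notin> e" for e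
      using agree that unfolding graph_of_def back_edges_def by auto
    then have "deletion_number (graph_of n f) {1..n} k \<le> Suc (deletion_number (graph_of n f') {1..n} k)"
      and "deletion_number (graph_of n f') {1..n} k \<le> Suc (deletion_number (graph_of n f) {1..n} k)"
      using \<open>i < n\<close> by (intro deletion_number_le_Suc[where v = "Suc i"] loopless_graph_of; auto)+
    then show ?thesis
      by linarith
  qed
  then show ?thesis
    using variance_Pi_pmf_bounded_differences[of n "\<lambda>i. back_edges (Suc i)" "\<lambda>_. bernoulli_pmf p"
        "\<lambda>f. real (deletion_number (graph_of n f) {1..n} k)" 1 False]
    by (simp add: edge_pmf_def UN_back_edges finite_back_edges back_edges_disjoint)
qed

lemma prob_deletion_number_deviation_le:
  assumes "t > 0"
  shows "measure_pmf.prob (edge_pmf n p)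
      {f. t \<le> \<bar>real (deletion_number (graph_of n f) {1..n} k) - measure_pmf.expectation (edge_pmf n p)
             (\<lambda>f. real (deletion_number (graph_of n f) {1..n} k))\<bar>}
    \<le> real n / t\<^sup>2"
  by (rule order_trans[OF Chebyshev_inequality_finite_pmf[OF finite_set_edge_pmf assms]
        divide_right_mono[OF variance_deletion_number_le]]) simp

lemma Lambda_eq_Least_edge_pmf:
  "Lambda n p = (LEAST k. 1/2 \<le> measure_pmf.prob (edge_pmf n p) {f. chi (graph_of n f) {1..n} \<le> k})"
  unfolding Lambda_def prob_gnp ..

lemma prob_chi_le_Lambda:
  "1/2 \<le> measure_pmf.prob (edge_pmf n p) {f. chi (graph_of n f) {1..n} \<le> Lambda n p}"
proof -
  have "1/2 \<le> measure_pmf.prob (edge_pmf n p) {f. chi (graph_of n f) {1..n} \<le> n}"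
    using chi_graph_of_le by simp
  then show ?thesis
    unfolding Lambda_eq_Least_edge_pmf by (rule LeastI)
qed

lemma prob_chi_less_Lambda:
  "measure_pmf.prob (edge_pmf n p) {f. chi (graph_of n f) {1..n} < Lambda n p} < 1/2"
proof (cases "Lambda n p")
  case (Suc k)
  then have "{f. chi (graph_of n f) {1..n} < Lambda n p} = {f. chi (graph_of n f) {1..n} \<le> k}"
    by auto
  moreover have "k < Lambda n p"
    using Suc by simp
  then have "\<not> 1/2 \<le> measure_pmf.prob (edge_pmf n p) {f. chi (graph_of n f) {1..n} \<le> k}"
    unfolding Lambda_eq_Least_edge_pmf by (rule not_less_Least)
  ultimately show ?thesis
    by simp
qed simp

lemma expectation_deletion_number_Lambda_le:
  "measure_pmf.expectation (edge_pmf n p)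
     (\<lambda>f. real (deletion_number (graph_of n f) {1..n} (Lambda n p))) \<le> sqrt (2 * real n)"
proof (rule real_le_rsqrt)
  let ?Y = "\<lambda>f. real (deletion_number (graph_of n f) {1..n} (Lambda n p))"
  let ?\<mu> = "measure_pmf.expectation (edge_pmf n p) ?Y"
  have "{f. ?Y f = 0} = {f. chi (graph_of n f) {1..n} \<le> Lambda n p}"
    by (simp add: deletion_number_eq_0_iff)
  then have "1/2 * ?\<mu>\<^sup>2 \<le> measure_pmf.prob (edge_pmf n p) {f. ?Y f = 0} * ?\<mu>\<^sup>2"
    using prob_chi_le_Lambda by (intro mult_right_mono) auto
  also have "\<dots> \<le> measure_pmf.variance (edge_pmf n p) ?Y"
    by (rule prob_eq_0_mult_expectation_sq_le_variance[OF finite_set_edge_pmf])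
  also have "\<dots> \<le> real n"
    by (rule variance_deletion_number_le)
  finally show "?\<mu>\<^sup>2 \<le> 2 * real n"
    by simp
qed

lemma prob_chi_gt_Lambda_add:
  assumes "n > 0" "w > sqrt 2"
  shows "measure_pmf.prob (edge_pmf n p) {f. real (Lambda n p) + g < real (chi (graph_of n f) {1..n})}
    \<le> 1 / (w - sqrt 2)\<^sup>2 + measure_pmf.prob (edge_pmf n p)
         {f. \<not> small_subgraphs_colourable (graph_of n f) {1..n} (w * sqrt n) g}"
proof -
  define Y where "Y = (\<lambda>f. real (deletion_number (graph_of n f) {1..n} (Lambda n p)))"
  define \<mu> where "\<mu> = measure_pmf.expectation (edge_pmf n p) Y"
  define t where "t = (w - sqrt 2) * sqrt n"
  have \<mu>_le: "\<mu> \<le> sqrt 2 * sqrt n"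
    using expectation_deletion_number_Lambda_le[of n p] by (simp add: \<mu>_def Y_def real_sqrt_mult)
  have "t \<le> \<bar>Y f - \<mu>\<bar>"
    if "real (Lambda n p) + g < real (chi (graph_of n f) {1..n})"
      and "small_subgraphs_colourable (graph_of n f) {1..n} (w * sqrt n) g" for f
  proof -
    have "\<not> Y f \<le> w * sqrt n"
    proof
      assume "Y f \<le> w * sqrt n"
      with loopless_graph_of finite_atLeastAtMost
      have "real (chi (graph_of n f) {1..n}) \<le> real (Lambda n p) + g"
        using that(2) unfolding Y_def by (rule chi_le_add_if_small_subgraphs_colourable)
      with that(1) show False
        by simp
    qed
    then have "t \<le> Y f - \<mu>"
      using \<mu>_le unfolding t_def by (simp add: left_diff_distrib)
    then show ?thesis
      by simp
  qed
  then have "measure_pmf.prob (edge_pmf n p) {f. real (Lambda n p) + g < real (chi (graph_of n f) {1..n})}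
    \<le> measure_pmf.prob (edge_pmf n p) {f. t \<le> \<bar>Y f - \<mu>\<bar>} + measure_pmf.prob (edge_pmf n p)
         {f. \<not> small_subgraphs_colourable (graph_of n f) {1..n} (w * sqrt n) g}"
    by (intro measure_pmf_prob_le_add_if_subset_Un) blast
  moreover have "measure_pmf.prob (edge_pmf n p) {f. t \<le> \<bar>Y f - \<mu>\<bar>} \<le> real n / t\<^sup>2"
    unfolding \<mu>_def Y_def using assms by (intro prob_deletion_number_deviation_le) (simp add: t_def)
  moreover have "real n / t\<^sup>2 = 1 / (w - sqrt 2)\<^sup>2"
    using assms by (simp add: t_def power_mult_distrib)
  ultimately show ?thesis
    by linarith
qed

lemma expectation_deletion_number_gt_if_below_Lambda:
  assumes "n > 0" "w > 0" and k: "real k + g < real (Lambda n p)"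
    and small: "4 / w\<^sup>2 + measure_pmf.prob (edge_pmf n p)
      {f. \<not> small_subgraphs_colourable (graph_of n f) {1..n} (w * sqrt n) g} < 1/2"
  shows "w * sqrt n / 2
    < measure_pmf.expectation (edge_pmf n p) (\<lambda>f. real (deletion_number (graph_of n f) {1..n} k))"
    (is "?s < ?\<mu>")
proof (rule ccontr)
  assume "\<not> ?s < ?\<mu>"
  define Y where "Y = (\<lambda>f. real (deletion_number (graph_of n f) {1..n} k))"
  define good where "good = {f. Y f \<le> w * sqrt n \<and>
    small_subgraphs_colourable (graph_of n f) {1..n} (w * sqrt n) g}"
  have "good \<subseteq> {f. chi (graph_of n f) {1..n} < Lambda n p}"
  proof
    fix f assume "f \<in> good"
    then have "real (chi (graph_of n f) {1..n}) \<le> real k + g"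
      unfolding good_def Y_def
      by (intro chi_le_add_if_small_subgraphs_colourable[OF loopless_graph_of]) auto
    with k show "f \<in> {f. chi (graph_of n f) {1..n} < Lambda n p}"
      by simp
  qed
  then have "measure_pmf.prob (edge_pmf n p) good
      \<le> measure_pmf.prob (edge_pmf n p) {f. chi (graph_of n f) {1..n} < Lambda n p}"
    by (rule measure_pmf.finite_measure_mono) simp
  then have "measure_pmf.prob (edge_pmf n p) good < 1/2"
    using prob_chi_less_Lambda[of n p] by linarith
  moreover have "?s \<le> \<bar>Y f - ?\<mu>\<bar>" if "w * sqrt n < Y f" for f
    using that \<open>\<not> ?s < ?\<mu>\<close> unfolding Y_def by linarith
  then have "measure_pmf.prob (edge_pmf n p) (UNIV - good)
      \<le> measure_pmf.prob (edge_pmf n p) {f. ?s \<le> \<bar>Y f - ?\<mu>\<bar>} + measure_pmf.prob (edge_pmf n p)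
        {f. \<not> small_subgraphs_colourable (graph_of n f) {1..n} (w * sqrt n) g}"
    unfolding good_def by (intro measure_pmf_prob_le_add_if_subset_Un) force
  moreover have "measure_pmf.prob (edge_pmf n p) {f. ?s \<le> \<bar>Y f - ?\<mu>\<bar>} \<le> real n / ?s\<^sup>2"
    unfolding Y_def using assms by (intro prob_deletion_number_deviation_le) simp
  moreover have "real n / ?s\<^sup>2 = 4 / w\<^sup>2"
    using assms by (simp add: power_mult_distrib power_divide)
  ultimately show False
    using small measure_pmf.prob_compl[of good "edge_pmf n p"] by simp
qed

lemma prob_chi_le_below_Lambda:
  assumes "n > 0" "w > 0" and k: "real k + g < real (Lambda n p)"
    and small: "4 / w\<^sup>2 + measure_pmf.prob (edge_pmf n p)
      {f. \<not> small_subgraphs_colourable (graph_of n f) {1..n} (w * sqrt n) g} < 1/2"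
  shows "measure_pmf.prob (edge_pmf n p) {f. chi (graph_of n f) {1..n} \<le> k} \<le> 4 / w\<^sup>2"
proof -
  define Y where "Y = (\<lambda>f. real (deletion_number (graph_of n f) {1..n} k))"
  define \<mu> where "\<mu> = measure_pmf.expectation (edge_pmf n p) Y"
  have \<mu>: "w * sqrt n / 2 < \<mu>"
    unfolding \<mu>_def Y_def using assms by (rule expectation_deletion_number_gt_if_below_Lambda)
  moreover have s: "0 < w * sqrt n / 2"
    using assms by simp
  ultimately have "0 < \<mu>"
    by linarith
  have "{f. chi (graph_of n f) {1..n} \<le> k} = {f. Y f = 0}"
    by (simp add: Y_def deletion_number_eq_0_iff)
  then have "measure_pmf.prob (edge_pmf n p) {f. chi (graph_of n f) {1..n} \<le> k} * \<mu>\<^sup>2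
      \<le> measure_pmf.variance (edge_pmf n p) Y"
    unfolding \<mu>_def by (simp add: prob_eq_0_mult_expectation_sq_le_variance[OF finite_set_edge_pmf])
  also have "\<dots> \<le> real n"
    unfolding Y_def by (rule variance_deletion_number_le)
  finally have "measure_pmf.prob (edge_pmf n p) {f. chi (graph_of n f) {1..n} \<le> k} \<le> real n / \<mu>\<^sup>2"
    using \<open>0 < \<mu>\<close> by (simp add: pos_le_divide_eq)
  also have "\<dots> \<le> real n / (w * sqrt n / 2)\<^sup>2"
  proof (rule divide_left_mono)
    show "(w * sqrt n / 2)\<^sup>2 \<le> \<mu>\<^sup>2"
      using \<mu> s by (intro power_mono) auto
    show "0 < \<mu>\<^sup>2 * (w * sqrt n / 2)\<^sup>2"
      using \<open>0 < \<mu>\<close> s by (intro mult_pos_pos zero_less_power)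
  qed simp
  also have "\<dots> = 4 / w\<^sup>2"
    using assms by (simp add: power_mult_distrib power_divide)
  finally show ?thesis .
qed

lemma prob_chi_lt_Lambda_diff:
  assumes "n > 0" "w > 0"
    and small: "4 / w\<^sup>2 + measure_pmf.prob (edge_pmf n p)
      {f. \<not> small_subgraphs_colourable (graph_of n f) {1..n} (w * sqrt n) g} < 1/2"
  shows "measure_pmf.prob (edge_pmf n p) {f. real (chi (graph_of n f) {1..n}) < real (Lambda n p) - g}
    \<le> 4 / w\<^sup>2"
proof (cases "real (Lambda n p) - g \<le> 0")
  case True
  then have "{f. real (chi (graph_of n f) {1..n}) < real (Lambda n p) - g} = {}"
    by auto
  then show ?thesis
    by simp
next
  case False
  define k where "k = nat (\<lceil>real (Lambda n p) - g\<rceil> - 1)"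
  have "{f. real (chi (graph_of n f) {1..n}) < real (Lambda n p) - g}
      \<subseteq> {f. chi (graph_of n f) {1..n} \<le> k}"
  proof safe
    fix f
    assume "real (chi (graph_of n f) {1..n}) < real (Lambda n p) - g"
    then have "int (chi (graph_of n f) {1..n}) < \<lceil>real (Lambda n p) - g\<rceil>"
      by (simp add: less_ceiling_iff)
    then show "chi (graph_of n f) {1..n} \<le> k"
      by (simp add: k_def)
  qed
  then have "measure_pmf.prob (edge_pmf n p) {f. real (chi (graph_of n f) {1..n}) < real (Lambda n p) - g}
      \<le> measure_pmf.prob (edge_pmf n p) {f. chi (graph_of n f) {1..n} \<le> k}"
    by (rule measure_pmf.finite_measure_mono) simp
  also have "\<dots> \<le> 4 / w\<^sup>2"
  proof (rule prob_chi_le_below_Lambda[OF assms(1,2) _ small])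
    show "real k + g < real (Lambda n p)"
      using False ceiling_correct[of "real (Lambda n p) - g"] by (simp add: k_def)
  qed
  finally show ?thesis .
qed

lemma prob_gnp_chi_near_Lambda_ge:
  assumes "n > 0" "w > sqrt 2"
    and small: "4 / w\<^sup>2 + measure_pmf.prob (gnp n p)
      {E. \<not> small_subgraphs_colourable E {1..n} (w * sqrt n) g} < 1/2"
  shows "1 - (1 / (w - sqrt 2)\<^sup>2 + 4 / w\<^sup>2 + measure_pmf.prob (gnp n p)
      {E. \<not> small_subgraphs_colourable E {1..n} (w * sqrt n) g})
    \<le> measure_pmf.prob (gnp n p) {E. \<bar>real (chi E {1..n}) - real (Lambda n p)\<bar> \<le> g}"
proof -
  have "w > 0"
    using assms(2) real_sqrt_ge_zero[of 2] by linarith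
  have "measure_pmf.prob (edge_pmf n p) {f. \<not> \<bar>real (chi (graph_of n f) {1..n}) - real (Lambda n p)\<bar> \<le> g}
      \<le> measure_pmf.prob (edge_pmf n p) {f. real (Lambda n p) + g < real (chi (graph_of n f) {1..n})}
        + measure_pmf.prob (edge_pmf n p) {f. real (chi (graph_of n f) {1..n}) < real (Lambda n p) - g}"
    by (intro measure_pmf_prob_le_add_if_subset_Un) auto
  then show ?thesis
    using prob_chi_gt_Lambda_add[OF assms(1,2), of p g]
      prob_chi_lt_Lambda_diff[OF assms(1) \<open>w > 0\<close>, of p g] small
    unfolding prob_gnp measure_pmf_prob_Collect_not by linarith
qed

theorem lemma5:
  fixes p :: "nat \<Rightarrow> real" and \<omega> :: "nat \<Rightarrow> real" and \<Gamma> :: "nat \<Rightarrow> real"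
  assumes p_range: "\<And>n. 0 \<le> p n \<and> p n \<le> 1"
    and omega_inf: "filterlim \<omega> at_top sequentially"
    and whp_local: "(\<lambda>n. measure_pmf.prob (gnp n (p n))
          {E. \<forall>Z \<subseteq> {1..n}. real (card Z) \<le> \<omega> n * sqrt (real n) \<longrightarrow>
                real (chi E Z) \<le> \<Gamma> n}) \<longlonglongrightarrow> 1"
  shows "(\<lambda>n. measure_pmf.prob (gnp n (p n))
          {E. \<bar>real (chi E {1..n}) - real (Lambda n (p n))\<bar> \<le> \<Gamma> n}) \<longlonglongrightarrow> 1"
proof -
  define \<beta> where "\<beta> = (\<lambda>n. measure_pmf.prob (gnp n (p n))
    {E. \<not> small_subgraphs_colourable E {1..n} (\<omega> n * sqrt n) (\<Gamma> n)})"
  define bound where "bound = (\<lambda>n. 1 / (\<omega> n - sqrt 2)\<^sup>2 + 4 / (\<omega> n)\<^sup>2 + \<beta> n)"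
  have "\<beta> \<longlonglongrightarrow> 0"
    using tendsto_diff[OF tendsto_const[of 1] whp_local]
    unfolding \<beta>_def small_subgraphs_colourable_def measure_pmf_prob_Collect_not by simp
  moreover have "filterlim (\<lambda>n. \<omega> n - sqrt 2) at_top sequentially"
    using filterlim_tendsto_add_at_top[OF tendsto_const[of "- sqrt 2"] omega_inf] by simp
  ultimately have "bound \<longlonglongrightarrow> 0" and small: "(\<lambda>n. 4 / (\<omega> n)\<^sup>2 + \<beta> n) \<longlonglongrightarrow> 0"
    unfolding bound_def using omega_inf by (auto intro!: tendsto_add_zero tendsto_divide_power2_at_top)
  have "eventually (\<lambda>n. \<omega> n > sqrt 2) sequentially"
    using omega_inf by (simp add: filterlim_at_top_dense)
  moreover have "eventually (\<lambda>n. 4 / (\<omega> n)\<^sup>2 + \<beta> n < 1/2) sequentially"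
    using small by (rule order_tendstoD) simp
  ultimately have lower: "eventually (\<lambda>n. 1 - bound n \<le> measure_pmf.prob (gnp n (p n))
      {E. \<bar>real (chi E {1..n}) - real (Lambda n (p n))\<bar> \<le> \<Gamma> n}) sequentially"
    using eventually_gt_at_top[of 0]
  proof eventually_elim
    case (elim n)
    then show ?case
      unfolding bound_def \<beta>_def by (intro prob_gnp_chi_near_Lambda_ge) simp_all
  qed
  have "(\<lambda>n. 1 - bound n) \<longlonglongrightarrow> 1"
    using tendsto_diff[OF tendsto_const[of 1] \<open>bound \<longlonglongrightarrow> 0\<close>] by simp
  from tendsto_sandwich[OF lower _ this tendsto_const] show ?thesis
    by simp
qed

end
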